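(* Let $\Omega\subseteq\mathbb{R}^N$ be open and bounded and let $T$ and $C$ be as in the context (with zero set of $\eta$ equal to $\partial\Omega$). Then $T$ is a bounded linear operator from $L^1(\Omega)$ to $L^1(\Omega)$ if and only if $$\mathcal{K}:=\sup_{y\in\Omega}\int_\Omega C(x)\rho\Big(\frac{x-y}{\eta(x)}\Big)\,dx<\infty.$$
   Context: $\rho\in C_c^\infty(\mathbb{R}^N)$ satisfies $0\le\rho\le1$, $\rho(x)=0$ iff $|x|\ge1$, $\rho$ is radially symmetric, and $\rho(x)\ge\rho(1/2)$ for all $|x|<1/2$. Set $M_\rho:=(\int_{B_1(0)}\rho(y)\,dy)^{-1}$. Let $\eta\in C^\infty(\mathbb{R}^N)$ be non-negative with $\eta^{-1}(\{0\})=\partial\Omega$, all derivatives of $\eta$ vanishing on $\partial\Omega$, and $\eta(x)<\mathrm{dist}(x,\partial\Omega)$ for every $x\notin\partial\Omega$. For $x\in\Omega$ let $C(x):=M_\rho/\eta(x)^N$, and for $f\in L^1_{loc}(\Omega)$ let $Tf(x):=C(x)\int_\Omega\rho\big(\frac{x-y}{\eta(x)}\big)f(y)\,dy$. *)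

theory Defs
  imports "HOL-Analysis.Analysis"
begin

text \<open>Iterated directional (Frechet) derivatives: iter_dderiv f [v1,...,vk] is
  the k-th derivative of f applied to the directions v1,...,vk.\<close>
fun iter_dderiv :: "('a::real_normed_vector \<Rightarrow> real) \<Rightarrow> 'a list \<Rightarrow> 'a \<Rightarrow> real" where
  "iter_dderiv f [] = f"
| "iter_dderiv f (v # vs) = (\<lambda>x. frechet_derivative (iter_dderiv f vs) (at x) v)"

definition smooth_fun :: "('a::real_normed_vector \<Rightarrow> real) \<Rightarrow> bool" where
  "smooth_fun f \<longleftrightarrow> (\<forall>vs x. iter_dderiv f vs differentiable (at x))"

definition M_rho :: "('a::euclidean_space \<Rightarrow> real) \<Rightarrow> real" where
  "M_rho \<rho> = 1 / (LINT y:ball 0 1|lebesgue. \<rho> y)"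

definition Cfun :: "('a::euclidean_space \<Rightarrow> real) \<Rightarrow> ('a \<Rightarrow> real) \<Rightarrow> 'a \<Rightarrow> real" where
  "Cfun \<rho> \<eta> x = M_rho \<rho> / (\<eta> x) ^ DIM('a)"

definition Top :: "('a::euclidean_space \<Rightarrow> real) \<Rightarrow> ('a \<Rightarrow> real) \<Rightarrow> 'a set \<Rightarrow> ('a \<Rightarrow> real) \<Rightarrow> 'a \<Rightarrow> real" where
  "Top \<rho> \<eta> \<Omega> f x = Cfun \<rho> \<eta> x * (LINT y:\<Omega>|lebesgue. \<rho> ((1 / \<eta> x) *\<^sub>R (x - y)) * f y)"

end

theory Submission
  imports Defs
begin

text \<open>
  T is the integral operator on \<Omega> with kernel k(x, y) = C(x) \<rho>((x - y) / \<eta>(x)), and the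
  condition is the L1 Schur test for k. Sufficiency is Tonelli: the L1 norm of Tf is at most
  the integral of |f(y)| times the column integral of k at y. For necessity, apply T to the
  normalised indicators of balls shrinking to y: since k(x, -) is continuous, their images
  converge pointwise to k(x, y), and Fatou's lemma bounds the column integral at y by the
  operator norm.
\<close>

definition kernel_operator ::
    "('a::euclidean_space \<Rightarrow> 'a \<Rightarrow> real) \<Rightarrow> 'a set \<Rightarrow> ('a \<Rightarrow> real) \<Rightarrow> 'a \<Rightarrow> real" where
  "kernel_operator k \<Omega> f x = (LINT y:\<Omega>|lebesgue. k x y * f y)"

definition L1_bounded_on :: "'a::euclidean_space set \<Rightarrow> (('a \<Rightarrow> real) \<Rightarrow> 'a \<Rightarrow> real) \<Rightarrow> bool" where
  "L1_bounded_on \<Omega> T \<longleftrightarrow> (\<exists>c. \<forall>f. set_integrable lebesgue \<Omega> f \<longrightarrow>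
      set_integrable lebesgue \<Omega> (T f) \<and>
      (LINT x:\<Omega>|lebesgue. \<bar>T f x\<bar>) \<le> c * (LINT x:\<Omega>|lebesgue. \<bar>f x\<bar>))"

lemma sigma_finite_measure_completion:
  assumes "sigma_finite_measure M"
  shows "sigma_finite_measure (completion M)"
proof
  obtain A where "countable A" "A \<subseteq> sets M" "\<Union>A = space M" "\<forall>a\<in>A. emeasure M a \<noteq> \<infinity>"
    using sigma_finite_measure.sigma_finite_countable[OF assms] by blast
  then show "\<exists>A. countable A \<and> A \<subseteq> sets (completion M) \<and> \<Union>A = space (completion M) \<and>
      (\<forall>a\<in>A. emeasure (completion M) a \<noteq> \<infinity>)"
    by (intro exI[of _ A]) auto
qed

lemma sigma_finite_measure_lebesgue: "sigma_finite_measure lebesgue"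
  by (rule sigma_finite_measure_completion) (rule lborel.sigma_finite_measure_axioms)

lemma norm_integral_le_nn_integral:
  "ennreal (norm (integral\<^sup>L M f)) \<le> (\<integral>\<^sup>+x. norm (f x) \<partial>M)"
  by (cases "integrable M f") (simp_all add: integral_norm_bound_ennreal not_integrable_integral_eq)

lemma nn_set_integral_abs_eq_set_integral:
  fixes f :: "'a \<Rightarrow> real"
  assumes "set_integrable M A f"
  shows "(\<integral>\<^sup>+x\<in>A. ennreal \<bar>f x\<bar> \<partial>M) = ennreal (LINT x:A|M. \<bar>f x\<bar>)"
proof -
  have "(\<integral>\<^sup>+x\<in>A. ennreal \<bar>f x\<bar> \<partial>M) = (\<integral>\<^sup>+x. ennreal \<bar>indicator A x *\<^sub>R f x\<bar> \<partial>M)"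
    by (intro nn_integral_cong) (simp split: split_indicator)
  also have "\<dots> = ennreal (\<integral>x. \<bar>indicator A x *\<^sub>R f x\<bar> \<partial>M)"
    using assms by (intro nn_integral_eq_integral) (auto simp: set_integrable_def)
  also have "(\<integral>x. \<bar>indicator A x *\<^sub>R f x\<bar> \<partial>M) = (LINT x:A|M. \<bar>f x\<bar>)"
    by (simp add: set_lebesgue_integral_def abs_mult)
  finally show ?thesis .
qed

lemma set_integrable_abs_le_if_nn_integral_le:
  fixes f :: "'a \<Rightarrow> real"
  assumes "set_borel_measurable M A f" and "(\<integral>\<^sup>+x\<in>A. ennreal \<bar>f x\<bar> \<partial>M) \<le> ennreal c" and "0 \<le> c"
  shows "set_integrable M A f" and "(LINT x:A|M. \<bar>f x\<bar>) \<le> c"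
proof -
  have "(\<integral>\<^sup>+x. ennreal (norm (indicator A x *\<^sub>R f x)) \<partial>M) = (\<integral>\<^sup>+x\<in>A. ennreal \<bar>f x\<bar> \<partial>M)"
    by (intro nn_integral_cong) (simp split: split_indicator)
  then show integrable: "set_integrable M A f"
    using assms(1,2) unfolding set_integrable_def set_borel_measurable_def
    by (intro integrableI_bounded) (auto simp: top.not_eq_extremum intro: le_less_trans)
  show "(LINT x:A|M. \<bar>f x\<bar>) \<le> c"
    using assms(2,3) nn_set_integral_abs_eq_set_integral[OF integrable] by simp
qed

lemma kernel_operator_measurable:
  assumes [measurable]: "case_prod k \<in> borel_measurable (lebesgue \<Otimes>\<^sub>M lebesgue)"
    and "set_borel_measurable lebesgue \<Omega> f"
  shows "kernel_operator k \<Omega> f \<in> borel_measurable lebesgue"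
proof -
  interpret lebesgue: sigma_finite_measure lebesgue
    by (rule sigma_finite_measure_lebesgue)
  have [measurable]: "(\<lambda>y. indicator \<Omega> y *\<^sub>R f y) \<in> borel_measurable lebesgue"
    using assms(2) by (simp add: set_borel_measurable_def)
  have "kernel_operator k \<Omega> f = (\<lambda>x. \<integral>y. k x y * (indicator \<Omega> y *\<^sub>R f y) \<partial>lebesgue)"
    by (intro ext) (simp add: kernel_operator_def set_lebesgue_integral_def mult_ac)
  also have "\<dots> \<in> borel_measurable lebesgue"
    by measurable
  finally show ?thesis .
qed

lemma nn_integral_abs_kernel_operator_le:
  assumes [measurable]: "\<Omega> \<in> sets lebesgue" "case_prod k \<in> borel_measurable (lebesgue \<Otimes>\<^sub>M lebesgue)"
    and f: "set_borel_measurable lebesgue \<Omega> f"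
    and k_nonneg: "\<And>x y. 0 \<le> k x y"
  shows "(\<integral>\<^sup>+x\<in>\<Omega>. ennreal \<bar>kernel_operator k \<Omega> f x\<bar> \<partial>lebesgue)
    \<le> (SUP y\<in>\<Omega>. \<integral>\<^sup>+x\<in>\<Omega>. ennreal (k x y) \<partial>lebesgue) * (\<integral>\<^sup>+y\<in>\<Omega>. ennreal \<bar>f y\<bar> \<partial>lebesgue)"
    (is "_ \<le> ?S * _")
proof -
  interpret pair_sigma_finite lebesgue lebesgue
    by (simp add: pair_sigma_finite_def sigma_finite_measure_lebesgue)
  define g where "g y = ennreal \<bar>indicator \<Omega> y *\<^sub>R f y\<bar>" for y
  have [measurable]: "(\<lambda>y. indicator \<Omega> y *\<^sub>R f y) \<in> borel_measurable lebesgue"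
    using f by (simp add: set_borel_measurable_def)
  then have g_meas[measurable]: "g \<in> borel_measurable lebesgue"
    unfolding g_def[abs_def] by measurable
  have g_eq: "g = (\<lambda>y. ennreal \<bar>f y\<bar> * indicator \<Omega> y)"
    by (simp add: g_def fun_eq_iff split: split_indicator)
  have pointwise: "ennreal \<bar>kernel_operator k \<Omega> f x\<bar> \<le> (\<integral>\<^sup>+y. ennreal (k x y) * g y \<partial>lebesgue)" for x
  proof -
    have "ennreal \<bar>kernel_operator k \<Omega> f x\<bar>
        \<le> (\<integral>\<^sup>+y. norm (indicator \<Omega> y *\<^sub>R (k x y * f y)) \<partial>lebesgue)"
      unfolding kernel_operator_def set_lebesgue_integral_def
      using norm_integral_le_nn_integral by (metis real_norm_def)
    also have "\<dots> = (\<integral>\<^sup>+y. ennreal (k x y) * g y \<partial>lebesgue)"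
      using k_nonneg by (intro nn_integral_cong) (simp add: g_def abs_mult ennreal_mult mult.left_commute)
    finally show ?thesis .
  qed
  have "(\<integral>\<^sup>+x\<in>\<Omega>. ennreal \<bar>kernel_operator k \<Omega> f x\<bar> \<partial>lebesgue)
      \<le> (\<integral>\<^sup>+x. (\<integral>\<^sup>+y. ennreal (k x y) * g y \<partial>lebesgue) * indicator \<Omega> x \<partial>lebesgue)"
    by (intro nn_integral_mono mult_right_mono pointwise) simp
  also have "\<dots> = (\<integral>\<^sup>+x. (\<integral>\<^sup>+y. ennreal (k x y) * indicator \<Omega> x * g y \<partial>lebesgue) \<partial>lebesgue)"
    by (intro nn_integral_cong, subst nn_integral_multc[symmetric]) (measurable, simp add: mult_ac)
  also have "\<dots> = (\<integral>\<^sup>+y. (\<integral>\<^sup>+x\<in>\<Omega>. ennreal (k x y) \<partial>lebesgue) * g y \<partial>lebesgue)"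
    by (subst Fubini'[symmetric]) (measurable, simp add: nn_integral_multc)
  also have "\<dots> \<le> (\<integral>\<^sup>+y. ?S * g y \<partial>lebesgue)"
    by (intro nn_integral_mono) (auto simp: g_eq intro!: mult_right_mono SUP_upper split: split_indicator)
  also have "\<dots> = ?S * (\<integral>\<^sup>+y\<in>\<Omega>. ennreal \<bar>f y\<bar> \<partial>lebesgue)"
    using nn_integral_cmult[OF g_meas, of ?S] by (simp add: g_eq)
  finally show ?thesis .
qed

lemma L1_bounded_kernel_operator:
  assumes "\<Omega> \<in> sets lebesgue" "case_prod k \<in> borel_measurable (lebesgue \<Otimes>\<^sub>M lebesgue)"
    and "\<And>x y. 0 \<le> k x y"
    and "(SUP y\<in>\<Omega>. \<integral>\<^sup>+x\<in>\<Omega>. ennreal (k x y) \<partial>lebesgue) < \<infinity>"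
  shows "L1_bounded_on \<Omega> (kernel_operator k \<Omega>)"
  unfolding L1_bounded_on_def
proof (intro exI allI impI)
  let ?S = "SUP y\<in>\<Omega>. \<integral>\<^sup>+x\<in>\<Omega>. ennreal (k x y) \<partial>lebesgue"
  fix f :: "'a \<Rightarrow> real" assume f: "set_integrable lebesgue \<Omega> f"
  then have f_meas: "set_borel_measurable lebesgue \<Omega> f"
    by (simp add: set_integrable_def set_borel_measurable_def)
  have meas: "set_borel_measurable lebesgue \<Omega> (kernel_operator k \<Omega> f)"
    unfolding set_borel_measurable_def
    using kernel_operator_measurable[OF assms(2) f_meas] assms(1) by measurable
  have norm_nonneg: "0 \<le> (LINT y:\<Omega>|lebesgue. \<bar>f y\<bar>)"
    by (simp add: set_lebesgue_integral_def)
  have "(\<integral>\<^sup>+x\<in>\<Omega>. ennreal \<bar>kernel_operator k \<Omega> f x\<bar> \<partial>lebesgue)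
      \<le> ?S * ennreal (LINT y:\<Omega>|lebesgue. \<bar>f y\<bar>)"
    using nn_integral_abs_kernel_operator_le[OF assms(1,2) f_meas assms(3)]
    by (simp add: nn_set_integral_abs_eq_set_integral[OF f])
  also have "\<dots> = ennreal (enn2real ?S * (LINT y:\<Omega>|lebesgue. \<bar>f y\<bar>))"
    using assms(4) norm_nonneg by (simp add: ennreal_mult)
  finally show "set_integrable lebesgue \<Omega> (kernel_operator k \<Omega> f) \<and>
      (LINT x:\<Omega>|lebesgue. \<bar>kernel_operator k \<Omega> f x\<bar>) \<le> enn2real ?S * (LINT y:\<Omega>|lebesgue. \<bar>f y\<bar>)"
    using set_integrable_abs_le_if_nn_integral_le[OF meas] norm_nonneg by simp
qed

lemma set_integrable_ball_if_continuous_on: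
  fixes g :: "'a::euclidean_space \<Rightarrow> real"
  assumes "continuous_on (cball y r) g"
  shows "set_integrable lebesgue (ball y r) g"
proof -
  have "integrable lborel (\<lambda>z. indicator (cball y r) z *\<^sub>R g z)"
    using borel_integrable_compact[OF compact_cball assms] .
  then have "set_integrable lebesgue (cball y r) g"
    unfolding set_integrable_def by (subst integrable_completion) auto
  then show ?thesis
    by (rule set_integrable_subset) auto
qed

lemma tendsto_ball_average:
  fixes g :: "'a::euclidean_space \<Rightarrow> real"
  assumes "open S" "y \<in> S" "continuous_on S g"
  shows "((\<lambda>r. (LINT z:ball y r|lebesgue. g z) / measure lebesgue (ball y r)) \<longlongrightarrow> g y) (at_right 0)"
proof (rule tendstoI)
  fix e :: real assume "0 < e"
  have "isCont g y"
    using assms continuous_on_eq_continuous_at by blast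
  then obtain d1 where "d1 > 0" and close: "\<And>z. dist z y < d1 \<Longrightarrow> \<bar>g z - g y\<bar> < e / 2"
    using \<open>0 < e\<close> unfolding continuous_at_eps_delta dist_real_def by (meson half_gt_zero)
  obtain d2 where "d2 > 0" "ball y d2 \<subseteq> S"
    using assms(1,2) openE by blast
  define d where "d = min d1 d2"
  have "dist ((LINT z:ball y r|lebesgue. g z) / measure lebesgue (ball y r)) (g y) < e"
    if r: "0 < r" "r < d" for r
  proof -
    let ?B = "ball y r" and ?m = "measure lebesgue (ball y r)"
    have m_pos: "0 < ?m"
      using content_ball_pos[OF \<open>0 < r\<close>] by simp
    have fin: "emeasure lebesgue ?B \<noteq> \<infinity>"
      using emeasure_bounded_finite[of ?B] by simp
    have "cball y r \<subseteq> S"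
      using \<open>ball y d2 \<subseteq> S\<close> r by (auto simp: d_def)
    then have int_g: "set_integrable lebesgue ?B g"
      by (intro set_integrable_ball_if_continuous_on continuous_on_subset[OF assms(3)])
    have int_const: "set_integrable lebesgue ?B (\<lambda>_. c)" for c :: real
      using fin by (simp add: set_integrable_def top.not_eq_extremum)
    have const: "(LINT z:?B|lebesgue. c) = c * ?m" for c :: real
      using fin by (simp add: set_integral_const)
    have near: "g y - e / 2 < g z \<and> g z < g y + e / 2" if "dist y z < r" for z
      using close[of z] that r unfolding abs_less_iff by (auto simp: d_def dist_commute)
    have "(LINT z:?B|lebesgue. g z) \<le> (LINT z:?B|lebesgue. g y + e / 2)"
      by (intro set_integral_mono int_g int_const) (auto dest!: near)
    moreover have "(LINT z:?B|lebesgue. g y - e / 2) \<le> (LINT z:?B|lebesgue. g z)"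
      by (intro set_integral_mono int_g int_const) (auto dest!: near)
    ultimately have "\<bar>(LINT z:?B|lebesgue. g z) - g y * ?m\<bar> \<le> e / 2 * ?m"
      unfolding const abs_le_iff by (simp add: algebra_simps)
    moreover have "(LINT z:?B|lebesgue. g z) / ?m - g y = ((LINT z:?B|lebesgue. g z) - g y * ?m) / ?m"
      using m_pos by (simp add: field_simps)
    ultimately have "\<bar>(LINT z:?B|lebesgue. g z) / ?m - g y\<bar> \<le> e / 2"
      using m_pos by (simp add: abs_divide pos_divide_le_eq)
    then show ?thesis
      using \<open>0 < e\<close> by (simp add: dist_real_def)
  qed
  then show "\<forall>\<^sub>F r in at_right 0. dist ((LINT z:ball y r|lebesgue. g z) / measure lebesgue (ball y r)) (g y) < e"
    using \<open>d1 > 0\<close> \<open>d2 > 0\<close> by (auto simp: eventually_at_right_field d_def intro!: exI[of _ d])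
qed

definition ball_density :: "'a::euclidean_space \<Rightarrow> real \<Rightarrow> 'a \<Rightarrow> real" where
  "ball_density y r z = indicator (ball y r) z / measure lebesgue (ball y r)"

lemma indicator_times_ball_density:
  "ball y r \<subseteq> \<Omega> \<Longrightarrow>
    indicator \<Omega> z * ball_density y r z = indicator (ball y r) z / measure lebesgue (ball y r)"
  by (auto simp: ball_density_def split: split_indicator)

lemma set_integrable_ball_density:
  assumes "ball y r \<subseteq> \<Omega>"
  shows "set_integrable lebesgue \<Omega> (ball_density y r)"
proof -
  have "emeasure lebesgue (ball y r) < \<infinity>"
    using emeasure_bounded_finite[of "ball y r"] by simp
  then show ?thesis
    unfolding set_integrable_def using assms by (simp add: indicator_times_ball_density)
qed

lemma set_integral_abs_ball_density:
  assumes "0 < r" "ball y r \<subseteq> \<Omega>"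
  shows "(LINT z:\<Omega>|lebesgue. \<bar>ball_density y r z\<bar>) = 1"
proof -
  have "emeasure lebesgue (ball y r) < \<infinity>"
    using emeasure_bounded_finite[of "ball y r"] by simp
  moreover have "0 < measure lebesgue (ball y r)"
    using content_ball_pos[OF assms(1)] by simp
  moreover have "\<bar>ball_density y r z\<bar> = ball_density y r z" for z
    by (simp add: ball_density_def)
  ultimately show ?thesis
    using assms(2) by (simp add: set_lebesgue_integral_def indicator_times_ball_density)
qed

lemma kernel_operator_ball_density:
  assumes "ball y r \<subseteq> \<Omega>"
  shows "kernel_operator k \<Omega> (ball_density y r) x
    = (LINT z:ball y r|lebesgue. k x z) / measure lebesgue (ball y r)"
  unfolding kernel_operator_def set_lebesgue_integral_def
  using assms by (auto simp: ball_density_def split: split_indicator intro!: Bochner_Integration.integral_cong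
      simp flip: integral_divide_zero)

lemma shrinking_balls_in_open:
  assumes "open S" "y \<in> S"
  obtains r :: "nat \<Rightarrow> real"
  where "\<And>n. 0 < r n" "\<And>n. ball y (r n) \<subseteq> S" "filterlim r (at_right 0) sequentially"
proof -
  obtain r0 where "0 < r0" "ball y r0 \<subseteq> S"
    using assms openE by blast
  show ?thesis
  proof (rule that)
    show "0 < r0 / Suc n" for n
      using \<open>0 < r0\<close> by simp
    show "ball y (r0 / Suc n) \<subseteq> S" for n
    proof -
      have "r0 / Suc n \<le> r0 / 1"
        using \<open>0 < r0\<close> by (intro divide_left_mono) auto
      then show ?thesis
        using \<open>ball y r0 \<subseteq> S\<close> by auto
    qed
    show "filterlim (\<lambda>n. r0 / Suc n) (at_right 0) sequentially"
    proof (rule tendsto_imp_filterlim_at_right)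
      show "(\<lambda>n. r0 / Suc n) \<longlonglongrightarrow> 0"
        using LIMSEQ_Suc[OF lim_const_over_n[of r0]] by simp
    qed (use \<open>0 < r0\<close> in simp)
  qed
qed

lemma kernel_operator_ball_density_tendsto:
  assumes "open \<Omega>" "y \<in> \<Omega>" "continuous_on \<Omega> (k x)"
    and "\<And>n. ball y (r n) \<subseteq> \<Omega>" "filterlim r (at_right 0) sequentially"
  shows "(\<lambda>n. kernel_operator k \<Omega> (ball_density y (r n)) x) \<longlonglongrightarrow> k x y"
  using filterlim_compose[OF tendsto_ball_average[OF assms(1-3)] assms(5)]
  by (simp add: kernel_operator_ball_density[OF assms(4)])

lemma nn_integral_column_le_L1_bound:
  fixes k :: "'a::euclidean_space \<Rightarrow> 'a \<Rightarrow> real"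
  assumes "open \<Omega>" "y \<in> \<Omega>" and k_cont: "\<And>x. x \<in> \<Omega> \<Longrightarrow> continuous_on \<Omega> (k x)"
    and bound: "\<And>f. set_integrable lebesgue \<Omega> f \<Longrightarrow>
      set_integrable lebesgue \<Omega> (kernel_operator k \<Omega> f) \<and>
      (LINT x:\<Omega>|lebesgue. \<bar>kernel_operator k \<Omega> f x\<bar>) \<le> c * (LINT x:\<Omega>|lebesgue. \<bar>f x\<bar>)"
  shows "(\<integral>\<^sup>+x\<in>\<Omega>. ennreal (k x y) \<partial>lebesgue) \<le> ennreal c"
proof -
  obtain r where r_pos: "\<And>n. 0 < r n" and ball_sub: "\<And>n. ball y (r n) \<subseteq> \<Omega>"
    and r_lim: "filterlim r (at_right 0) sequentially"
    using shrinking_balls_in_open[OF assms(1,2)] by blast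
  define T where "T n = kernel_operator k \<Omega> (ball_density y (r n))" for n
  define u where "u n x = ennreal \<bar>T n x\<bar> * indicator \<Omega> x" for n x
  have T_bound: "set_integrable lebesgue \<Omega> (T n) \<and> (LINT x:\<Omega>|lebesgue. \<bar>T n x\<bar>) \<le> c" for n
    using bound[OF set_integrable_ball_density[OF ball_sub]]
    by (simp add: T_def set_integral_abs_ball_density[OF r_pos ball_sub])
  have u_meas: "u n \<in> borel_measurable lebesgue" for n
  proof -
    have "(\<lambda>x. indicator \<Omega> x *\<^sub>R T n x) \<in> borel_measurable lebesgue"
      using T_bound[of n] unfolding set_integrable_def by (blast intro: borel_measurable_integrable)
    then have "(\<lambda>x. ennreal \<bar>indicator \<Omega> x *\<^sub>R T n x\<bar>) \<in> borel_measurable lebesgue"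
      by measurable
    then show ?thesis
      by (rule measurable_cong[THEN iffD1, rotated]) (simp add: u_def split: split_indicator)
  qed
  have u_int: "integral\<^sup>N lebesgue (u n) \<le> ennreal c" for n
  proof -
    have "integral\<^sup>N lebesgue (u n) = ennreal (LINT x:\<Omega>|lebesgue. \<bar>T n x\<bar>)"
      unfolding u_def by (rule nn_set_integral_abs_eq_set_integral) (use T_bound in blast)
    then show ?thesis
      using T_bound[of n] by (simp add: ennreal_leI)
  qed
  have u_liminf: "ennreal (k x y) * indicator \<Omega> x \<le> liminf (\<lambda>n. u n x)" for x
  proof (cases "x \<in> \<Omega>")
    case True
    have "(\<lambda>n. u n x) \<longlonglongrightarrow> ennreal \<bar>k x y\<bar>"
      using kernel_operator_ball_density_tendsto[where k = k, OF assms(1,2) k_cont[OF True] ball_sub r_lim] True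
      by (simp add: u_def T_def tendsto_rabs)
    then have "liminf (\<lambda>n. u n x) = ennreal \<bar>k x y\<bar>"
      by (simp add: lim_imp_Liminf)
    then show ?thesis
      using True by (simp add: ennreal_leI)
  qed simp
  have "(\<integral>\<^sup>+x\<in>\<Omega>. ennreal (k x y) \<partial>lebesgue) \<le> (\<integral>\<^sup>+x. liminf (\<lambda>n. u n x) \<partial>lebesgue)"
    by (intro nn_integral_mono u_liminf)
  also have "\<dots> \<le> liminf (\<lambda>n. integral\<^sup>N lebesgue (u n))"
    by (rule nn_integral_liminf) (rule u_meas)
  also have "\<dots> \<le> ennreal c"
    by (rule Liminf_le) (auto intro!: always_eventually u_int)
  finally show ?thesis .
qed

lemma L1_bounded_kernel_operator_iff:
  fixes k :: "'a::euclidean_space \<Rightarrow> 'a \<Rightarrow> real"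
  assumes "open \<Omega>" and k_meas: "case_prod k \<in> borel_measurable (lebesgue \<Otimes>\<^sub>M lebesgue)"
    and k_nonneg: "\<And>x y. 0 \<le> k x y" and k_cont: "\<And>x. x \<in> \<Omega> \<Longrightarrow> continuous_on \<Omega> (k x)"
  shows "L1_bounded_on \<Omega> (kernel_operator k \<Omega>) \<longleftrightarrow>
    (SUP y\<in>\<Omega>. \<integral>\<^sup>+x\<in>\<Omega>. ennreal (k x y) \<partial>lebesgue) < \<infinity>"
proof
  assume "L1_bounded_on \<Omega> (kernel_operator k \<Omega>)"
  then obtain c where c: "\<And>f. set_integrable lebesgue \<Omega> f \<Longrightarrow>
      set_integrable lebesgue \<Omega> (kernel_operator k \<Omega> f) \<and>
      (LINT x:\<Omega>|lebesgue. \<bar>kernel_operator k \<Omega> f x\<bar>) \<le> c * (LINT x:\<Omega>|lebesgue. \<bar>f x\<bar>)"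
    unfolding L1_bounded_on_def by blast
  have "(SUP y\<in>\<Omega>. \<integral>\<^sup>+x\<in>\<Omega>. ennreal (k x y) \<partial>lebesgue) \<le> ennreal c"
    using nn_integral_column_le_L1_bound[OF \<open>open \<Omega>\<close> _ k_cont c] by (rule SUP_least)
  also have "\<dots> < \<infinity>"
    by simp
  finally show "(SUP y\<in>\<Omega>. \<integral>\<^sup>+x\<in>\<Omega>. ennreal (k x y) \<partial>lebesgue) < \<infinity>" .
next
  assume "(SUP y\<in>\<Omega>. \<integral>\<^sup>+x\<in>\<Omega>. ennreal (k x y) \<partial>lebesgue) < \<infinity>"
  then show "L1_bounded_on \<Omega> (kernel_operator k \<Omega>)"
    using \<open>open \<Omega>\<close> by (intro L1_bounded_kernel_operator[OF _ k_meas k_nonneg]) simp_all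
qed

lemma smooth_fun_continuous_on:
  assumes "smooth_fun f"
  shows "continuous_on UNIV f"
proof -
  have "f differentiable (at x)" for x
    using assms unfolding smooth_fun_def by (metis iter_dderiv.simps(1))
  then show ?thesis
    by (simp add: continuous_at_imp_continuous_on differentiable_imp_continuous_within)
qed

lemma smooth_fun_borel_measurable: "smooth_fun f \<Longrightarrow> f \<in> borel_measurable borel"
  by (intro borel_measurable_continuous_onI smooth_fun_continuous_on)

definition Top_kernel :: "('a::euclidean_space \<Rightarrow> real) \<Rightarrow> ('a \<Rightarrow> real) \<Rightarrow> 'a \<Rightarrow> 'a \<Rightarrow> real" where
  "Top_kernel \<rho> \<eta> x y = Cfun \<rho> \<eta> x * \<rho> ((1 / \<eta> x) *\<^sub>R (x - y))"

lemma Top_eq_kernel_operator: "Top \<rho> \<eta> \<Omega> = kernel_operator (Top_kernel \<rho> \<eta>) \<Omega>"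
  by (intro ext) (simp add: Top_def Top_kernel_def kernel_operator_def mult.assoc)

lemma Top_kernel_nonneg:
  assumes "\<And>x. 0 \<le> \<rho> x" "\<And>x. 0 \<le> \<eta> x"
  shows "0 \<le> Top_kernel \<rho> \<eta> x y"
proof -
  have "0 \<le> (LINT y:ball 0 1|lebesgue. \<rho> y)"
    unfolding set_lebesgue_integral_def by (rule integral_nonneg_AE) (simp add: assms(1))
  then show ?thesis
    using assms by (simp add: Top_kernel_def Cfun_def M_rho_def)
qed

lemma Top_kernel_measurable:
  assumes [measurable]: "\<rho> \<in> borel_measurable borel" "\<eta> \<in> borel_measurable borel"
  shows "case_prod (Top_kernel \<rho> \<eta>) \<in> borel_measurable (lebesgue \<Otimes>\<^sub>M lebesgue)"
proof -
  have [measurable]: "(\<lambda>x. x) \<in> lebesgue \<rightarrow>\<^sub>M (borel :: 'a measure)"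
    by (rule measurable_completion) simp
  show ?thesis
    unfolding Top_kernel_def[abs_def] Cfun_def by measurable
qed

lemma continuous_on_Top_kernel:
  assumes "continuous_on UNIV \<rho>"
  shows "continuous_on S (Top_kernel \<rho> \<eta> x)"
proof -
  have "continuous_on UNIV (\<lambda>y. \<rho> ((1 / \<eta> x) *\<^sub>R (x - y)))"
    by (rule continuous_on_compose2[OF assms]) (auto intro!: continuous_intros)
  then show ?thesis
    unfolding Top_kernel_def[abs_def] by (rule continuous_on_subset[OF continuous_on_mult_left]) simp
qed

theorem proposition5p1:
  fixes \<Omega> :: "'a::euclidean_space set" and \<rho> \<eta> :: "'a \<Rightarrow> real"
  assumes "open \<Omega>" and "bounded \<Omega>"
    and rho_smooth: "smooth_fun \<rho>"
    and rho_bounds: "\<And>x. 0 \<le> \<rho> x \<and> \<rho> x \<le> 1"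
    and rho_zero: "\<And>x. \<rho> x = 0 \<longleftrightarrow> norm x \<ge> 1"
    and rho_radial: "\<And>x z. norm x = norm z \<Longrightarrow> \<rho> x = \<rho> z"
    and rho_half: "\<And>x z. norm x < 1/2 \<Longrightarrow> norm z = 1/2 \<Longrightarrow> \<rho> x \<ge> \<rho> z"
    and eta_smooth: "smooth_fun \<eta>"
    and eta_nonneg: "\<And>x. \<eta> x \<ge> 0"
    and eta_zero: "{x. \<eta> x = 0} = frontier \<Omega>"
    and eta_flat: "\<And>vs x. x \<in> frontier \<Omega> \<Longrightarrow> iter_dderiv \<eta> vs x = 0"
    and eta_dist: "\<And>x. x \<notin> frontier \<Omega> \<Longrightarrow> \<eta> x < infdist x (frontier \<Omega>)"
  shows "(\<exists>c. \<forall>f. set_integrable lebesgue \<Omega> f \<longrightarrow>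
              set_integrable lebesgue \<Omega> (Top \<rho> \<eta> \<Omega> f) \<and>
              (LINT x:\<Omega>|lebesgue. \<bar>Top \<rho> \<eta> \<Omega> f x\<bar>) \<le> c * (LINT x:\<Omega>|lebesgue. \<bar>f x\<bar>))
         \<longleftrightarrow>
         (SUP y\<in>\<Omega>. \<integral>\<^sup>+ x\<in>\<Omega>. ennreal (Cfun \<rho> \<eta> x * \<rho> ((1 / \<eta> x) *\<^sub>R (x - y))) \<partial>lebesgue) < \<infinity>"
proof -
  have "L1_bounded_on \<Omega> (kernel_operator (Top_kernel \<rho> \<eta>) \<Omega>) \<longleftrightarrow>
      (SUP y\<in>\<Omega>. \<integral>\<^sup>+x\<in>\<Omega>. ennreal (Top_kernel \<rho> \<eta> x y) \<partial>lebesgue) < \<infinity>"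
  proof (rule L1_bounded_kernel_operator_iff[OF \<open>open \<Omega>\<close>])
    show "case_prod (Top_kernel \<rho> \<eta>) \<in> borel_measurable (lebesgue \<Otimes>\<^sub>M lebesgue)"
      using rho_smooth eta_smooth by (intro Top_kernel_measurable smooth_fun_borel_measurable)
    show "0 \<le> Top_kernel \<rho> \<eta> x y" for x y
      using rho_bounds eta_nonneg by (simp add: Top_kernel_nonneg)
    show "continuous_on \<Omega> (Top_kernel \<rho> \<eta> x)" for x
      using rho_smooth by (intro continuous_on_Top_kernel smooth_fun_continuous_on)
  qed
  then show ?thesis
    unfolding L1_bounded_on_def Top_eq_kernel_operator Top_kernel_def .
qed

end
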